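(* Let $d,k\ge 0$ be integers. Then: (1) $f(k,d)\ge \frac{(k+1)(d+2t)}{(d+k+t+1)(d+t)}\ge \frac{k+1}{d+k+1}$, where $t$ is the unique integer with $1\le t\le k+1$ and $d\equiv k+1-t \pmod{k+1}$. (2) If $k\ge d$, then $f(k,d)\ge \frac{2k+2-d}{2k+2}$. Moreover, for $k\ge 1$, $f(k,1)=\frac{2k+1}{2k+2}$, attained by the graph $K_{1,k+1}\cup kK_1$ (a star with $k+1$ leaves together with $k$ isolated vertices). (3) For every finite simple graph $G$ on $n\ge 1$ vertices, $\alpha_k(G)\ge \frac{k+1}{\lceil d(G)\rceil+k+1}\,n$.
   Context: For a graph $G=(V,E)$ and an integer $k\ge 0$, a $k$-independent set is a set $S\subseteq V$ such that the induced subgraph $G[S]$ has maximum degree at most $k$; $\alpha_k(G)$ denotes the maximum cardinality of a $k$-independent set of $G$. $n(G)$ is the number of vertices and $d(G)=2|E(G)|/n(G)$ the average degree. For integers $d,k\ge 0$, $f(k,d)=\inf\left\{\frac{\alpha_k(G)}{n(G)} : G \text{ a finite simple graph with at least one vertex and } d(G)\le d\right\}$. *)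

theory Defs
  imports Complex_Main
begin

definition simple_graph :: "'a set \<Rightarrow> 'a set set \<Rightarrow> bool" where
  "simple_graph V E \<longleftrightarrow> finite V \<and> (\<forall>e\<in>E. e \<subseteq> V \<and> card e = 2)"

definition k_independent :: "'a set \<Rightarrow> 'a set set \<Rightarrow> nat \<Rightarrow> 'a set \<Rightarrow> bool" where
  "k_independent V E k S \<longleftrightarrow> S \<subseteq> V \<and> (\<forall>v\<in>S. card {u\<in>S. {u, v} \<in> E} \<le> k)"

definition alpha_k :: "'a set \<Rightarrow> 'a set set \<Rightarrow> nat \<Rightarrow> nat" where
  "alpha_k V E k = Max {card S | S. k_independent V E k S}"

definition avg_degree :: "'a set \<Rightarrow> 'a set set \<Rightarrow> real" where
  "avg_degree V E = 2 * real (card E) / real (card V)"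

text \<open>Every finite graph is isomorphic to one on natural-number
vertices, so ranging over graphs with vertex type nat is without loss of generality.\<close>
definition f :: "nat \<Rightarrow> nat \<Rightarrow> real" where
  "f k d = Inf {real (alpha_k V E k) / real (card V) | V E :: nat set set.
                  simple_graph V E \<and> V \<noteq> {} \<and> avg_degree V E \<le> real d}"

end

theory Submission
  imports Defs
begin

text \<open>
  The heart of the proof is a counting inequality: for every simple graph G with n vertices
  and every m \<ge> 1,
     2(k+1) m n \<le> (k+1) m (m+1) alpha_k(G) + 2|E(G)|.
  It is proved by induction on m and, inside that, on n.  A vertex of degree at least m(k+1)
  is deleted (this loses one vertex but at least m(k+1) edges).  If all degrees are smaller,
  a partition lemma of Lov\'asz type splits V into m k-independent classes, so that
  n \<le> m alpha_k(G); together with the inequality for m - 1 this gives the claim.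

  Dividing by n and using 2|E| \<le> d n yields
     alpha_k(G)/n \<ge> (2(k+1)m - d) / ((k+1) m (m+1)).
  Choosing m = 1 gives part (2); choosing (k+1) m = d + t, where t is determined by the
  residue of d modulo k+1, gives part (1); and d = \<lceil>d(G)\<rceil> gives part (3).
\<close>

lemma simple_graph_finite_edges: "simple_graph V E \<Longrightarrow> finite E"
  unfolding simple_graph_def by (meson PowI finite_Pow_iff rev_finite_subset subsetI)

lemma card_filter_split:
  assumes "finite A"
  shows "card A = card {x\<in>A. \<not> P x} + card {x\<in>A. P x}"
proof -
  have "A = {x\<in>A. \<not> P x} \<union> {x\<in>A. P x}" by auto
  then show ?thesis
    using assms by (metis (no_types, lifting) card_Un_disjoint disjoint_iff finite_Un mem_Collect_eq)
qed

lemma edge_through_vertex: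
  assumes "simple_graph V E" "e \<in> E" "v \<in> e"
  obtains u where "u \<noteq> v" "e = {u, v}" "u \<in> V"
proof -
  have "card e = 2" "e \<subseteq> V" using assms unfolding simple_graph_def by auto
  then obtain x y where "e = {x, y}" "x \<noteq> y" by (auto simp: card_2_iff)
  with assms(3) \<open>e \<subseteq> V\<close> show ?thesis
    by (metis insert_commute insert_iff singletonD subset_iff that)
qed

lemma no_loops: "simple_graph V E \<Longrightarrow> {v} \<notin> E"
  unfolding simple_graph_def by fastforce

lemma card_incident_edges:
  assumes "simple_graph V E"
  shows "card {e\<in>E. v \<in> e \<and> P e} = card {u\<in>V. {u, v} \<in> E \<and> P {u, v}}"
proof -
  have "{e\<in>E. v \<in> e \<and> P e} = (\<lambda>u. {u, v}) ` {u\<in>V. {u, v} \<in> E \<and> P {u, v}}"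
    by (auto elim: edge_through_vertex[OF assms])
  moreover have "inj_on (\<lambda>u. {u, v}) A" for A
    by (auto simp: inj_on_def doubleton_eq_iff)
  ultimately show ?thesis by (simp add: card_image)
qed

lemma alpha_k_attained:
  assumes "simple_graph V E"
  shows "\<exists>S. k_independent V E k S \<and> card S = alpha_k V E k"
    and "k_independent V E k S \<Longrightarrow> card S \<le> alpha_k V E k"
proof -
  let ?C = "{card S | S. k_independent V E k S}"
  have "?C \<subseteq> {..card V}"
    using assms by (auto simp: simple_graph_def k_independent_def card_mono)
  hence fin: "finite ?C" using finite_subset by blast
  have "k_independent V E k {}" by (simp add: k_independent_def)
  hence "?C \<noteq> {}" by blast
  show "\<exists>S. k_independent V E k S \<and> card S = alpha_k V E k"
    using Max_in[OF fin \<open>?C \<noteq> {}\<close>] unfolding alpha_k_def by auto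
  show "k_independent V E k S \<Longrightarrow> card S \<le> alpha_k V E k"
    unfolding alpha_k_def using fin by (auto intro: Max_ge)
qed

lemma delete_vertex:
  assumes sg: "simple_graph V E" and v: "v \<in> V"
  shows "simple_graph (V - {v}) {e\<in>E. v \<notin> e}"
    and "card E = card {e\<in>E. v \<notin> e} + card {e\<in>E. v \<in> e}"
    and "alpha_k (V - {v}) {e\<in>E. v \<notin> e} k \<le> alpha_k V E k"
proof -
  show sg': "simple_graph (V - {v}) {e\<in>E. v \<notin> e}"
    using sg unfolding simple_graph_def by auto
  show "card E = card {e\<in>E. v \<notin> e} + card {e\<in>E. v \<in> e}"
    using simple_graph_finite_edges[OF sg] by (rule card_filter_split)
  obtain S where S: "k_independent (V - {v}) {e\<in>E. v \<notin> e} k S"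
      "card S = alpha_k (V - {v}) {e\<in>E. v \<notin> e} k"
    using alpha_k_attained(1)[OF sg'] by blast
  have "{u \<in> S. {u, w} \<in> E} = {u \<in> S. {u, w} \<in> {e\<in>E. v \<notin> e}}" if "w \<in> S" for w
    using S(1) that by (auto simp: k_independent_def)
  with S(1) have "k_independent V E k S"
    by (auto simp: k_independent_def)
  then show "alpha_k (V - {v}) {e\<in>E. v \<notin> e} k \<le> alpha_k V E k"
    using alpha_k_attained(2)[OF sg] S(2) by metis
qed

section \<open>A partition lemma of Lov\'asz type\<close>

lemma colour_class_average:
  assumes A: "finite A" and g: "\<forall>x\<in>A. g x < m" and m: "1 \<le> m"
  shows "\<exists>j<m. m * card {x\<in>A. g x = j} \<le> card A"
    and "\<exists>j<m. card A \<le> m * card {x\<in>A. g x = j}"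
proof -
  have "card A = (\<Sum>j<m. card {x\<in>A. g x = j})"
    using sum_fun_comp[OF A, of "{..<m}" g "\<lambda>_. 1::nat"] g by (auto simp: image_subset_iff)
  hence total: "(\<Sum>j<m. m * card {x\<in>A. g x = j}) = (\<Sum>j<m. card A)"
    by (simp add: sum_distrib_left[symmetric])
  have ne: "{..<m} \<noteq> {}" using m by (simp add: lessThan_empty_iff)
  show "\<exists>j<m. m * card {x\<in>A. g x = j} \<le> card A"
  proof (rule ccontr)
    assume "\<not> ?thesis"
    hence "(\<Sum>j<m. card A) < (\<Sum>j<m. m * card {x\<in>A. g x = j})"
      using ne by (intro sum_strict_mono) auto
    with total show False by simp
  qed
  show "\<exists>j<m. card A \<le> m * card {x\<in>A. g x = j}"
  proof (rule ccontr)
    assume "\<not> ?thesis"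
    hence "(\<Sum>j<m. m * card {x\<in>A. g x = j}) < (\<Sum>j<m. card A)"
      using ne by (intro sum_strict_mono) auto
    with total show False by simp
  qed
qed

definition mono_edges :: "'a set set \<Rightarrow> ('a \<Rightarrow> nat) \<Rightarrow> 'a set set" where
  "mono_edges E c = {e\<in>E. \<forall>x\<in>e. \<forall>y\<in>e. c x = c y}"

lemma card_mono_edges_at_vertex:
  assumes sg: "simple_graph V E"
  shows "card (mono_edges E c) =
           card {e\<in>mono_edges E c. v \<notin> e} + card {u\<in>V. {u, v} \<in> E \<and> c u = c v}"
proof -
  have "card (mono_edges E c) =
          card {e\<in>mono_edges E c. v \<notin> e} + card {e\<in>mono_edges E c. v \<in> e}"
    using simple_graph_finite_edges[OF sg] by (intro card_filter_split) (simp add: mono_edges_def)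
  moreover have "{e\<in>mono_edges E c. v \<in> e} = {e\<in>E. v \<in> e \<and> (\<forall>x\<in>e. \<forall>y\<in>e. c x = c y)}"
    by (auto simp: mono_edges_def)
  moreover have "{u\<in>V. {u, v} \<in> E \<and> (\<forall>x\<in>{u, v}. \<forall>y\<in>{u, v}. c x = c y)}
                  = {u\<in>V. {u, v} \<in> E \<and> c u = c v}"
    by auto
  ultimately show ?thesis
    using card_incident_edges[OF sg, of v "\<lambda>e. \<forall>x\<in>e. \<forall>y\<in>e. c x = c y"] by simp
qed

lemma mono_edges_recolour:
  "{e\<in>mono_edges E (c(v := j)). v \<notin> e} = {e\<in>mono_edges E c. v \<notin> e}"
proof (rule Collect_cong)
  fix e
  show "(e \<in> mono_edges E (c(v := j)) \<and> v \<notin> e) = (e \<in> mono_edges E c \<and> v \<notin> e)"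
  proof (cases "v \<in> e")
    case False
    then have "\<And>x. x \<in> e \<Longrightarrow> (c(v := j)) x = c x" by auto
    then show ?thesis by (simp add: mono_edges_def)
  qed simp
qed

text \<open>Otherwise some colour occurs at most k times among its neighbours, and recolouring the
  vertex with that colour would remove monochromatic edges.\<close>
lemma optimal_colouring_few_same_colour:
  assumes sg: "simple_graph V E"
    and deg: "\<forall>v\<in>V. card {u\<in>V. {u, v} \<in> E} < m * (k + 1)"
    and cV: "\<forall>x\<in>V. c x < m"
    and cmin: "\<And>c'. \<forall>x\<in>V. c' x < m \<Longrightarrow> card (mono_edges E c) \<le> card (mono_edges E c')"
    and v: "v \<in> V"
  shows "card {u\<in>V. {u, v} \<in> E \<and> c u = c v} \<le> k"
proof (rule ccontr)
  assume many: "\<not> ?thesis"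
  let ?N = "{u\<in>V. {u, v} \<in> E}"
  have "finite ?N" "1 \<le> m" using sg cV v by (auto simp: simple_graph_def)
  then obtain j where j: "j < m" "m * card {u\<in>?N. c u = j} \<le> card ?N"
    using colour_class_average(1)[of ?N c m] cV by auto
  have "{u\<in>?N. c u = j} = {u\<in>V. {u, v} \<in> E \<and> c u = j}" by auto
  with j(2) have "m * card {u\<in>V. {u, v} \<in> E \<and> c u = j} \<le> card ?N" by simp
  also have "\<dots> < m * (k + 1)" using deg v by blast
  finally have j_rare: "card {u\<in>V. {u, v} \<in> E \<and> c u = j} \<le> k"
    by (simp only: mult_less_cancel1) simp
  define c' where "c' = c(v := j)"
  have "{e\<in>mono_edges E c'. v \<notin> e} = {e\<in>mono_edges E c. v \<notin> e}"
    unfolding c'_def by (rule mono_edges_recolour)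
  moreover have "{u\<in>V. {u, v} \<in> E \<and> c' u = c' v} = {u\<in>V. {u, v} \<in> E \<and> c u = j}"
    using no_loops[OF sg, of v] by (auto simp: c'_def)
  ultimately have "card (mono_edges E c') =
                     card {e\<in>mono_edges E c. v \<notin> e} + card {u\<in>V. {u, v} \<in> E \<and> c u = j}"
    using card_mono_edges_at_vertex[OF sg, of c' v] by simp
  hence "card (mono_edges E c') < card (mono_edges E c)"
    using card_mono_edges_at_vertex[OF sg, of c v] many j_rare by linarith
  moreover have "card (mono_edges E c) \<le> card (mono_edges E c')"
    using cV j by (intro cmin) (auto simp: c'_def)
  ultimately show False by linarith
qed

text \<open>Lov\'asz: if every degree is below m(k+1), the colour classes of an optimal
  m-colouring are k-independent, and the largest one has at least n/m vertices.\<close>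
lemma lovasz_partition:
  assumes sg: "simple_graph V E" and m: "1 \<le> m"
    and deg: "\<forall>v\<in>V. card {u\<in>V. {u, v} \<in> E} < m * (k + 1)"
  shows "\<exists>S. k_independent V E k S \<and> card V \<le> m * card S"
proof -
  obtain c where cV: "\<forall>x\<in>V. c x < m"
    and cmin: "\<And>c'. \<forall>x\<in>V. c' x < m \<Longrightarrow> card (mono_edges E c) \<le> card (mono_edges E c')"
    using ex_has_least_nat[of "\<lambda>c. \<forall>x\<in>V. c x < m" "\<lambda>_. 0" "\<lambda>c. card (mono_edges E c)"] m
    by auto
  have few_same_colour: "card {u\<in>V. {u, v} \<in> E \<and> c u = c v} \<le> k" if "v \<in> V" for v
    using sg deg cV cmin that by (rule optimal_colouring_few_same_colour)
  have classes_independent: "k_independent V E k {x\<in>V. c x = i}" for i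
    unfolding k_independent_def
  proof (intro conjI ballI)
    fix w assume "w \<in> {x\<in>V. c x = i}"
    then have w: "w \<in> V" "c w = i" by auto
    then have "{u\<in>{x\<in>V. c x = i}. {u, w} \<in> E} = {u\<in>V. {u, w} \<in> E \<and> c u = c w}" by auto
    then show "card {u\<in>{x\<in>V. c x = i}. {u, w} \<in> E} \<le> k"
      using few_same_colour[OF w(1)] by simp
  qed blast
  have "finite V" using sg by (simp add: simple_graph_def)
  then obtain i where "card V \<le> m * card {x\<in>V. c x = i}"
    using colour_class_average(2)[OF _ cV m] by blast
  then show ?thesis using classes_independent by blast
qed

section \<open>The counting inequality\<close>

definition counting_bound :: "nat \<Rightarrow> nat \<Rightarrow> 'a set \<Rightarrow> 'a set set \<Rightarrow> bool" where
  "counting_bound k m V E \<longleftrightarrow>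
     2 * (k + 1) * m * card V \<le> (k + 1) * m * (m + 1) * alpha_k V E k + 2 * card E"

text \<open>The arithmetic of the low-degree case, with K = k + 1, n = |V|, a = alpha_k and e = |E|:
  from n \<le> (M+1) a and the counting inequality for M (when M \<ge> 1) follows the one for M+1.\<close>
lemma counting_arith:
  fixes K n a e M :: nat
  assumes many_indep: "n \<le> (M + 1) * a"
    and prev: "1 \<le> M \<Longrightarrow> 2 * K * M * n \<le> K * M * (M + 1) * a + 2 * e"
  shows "2 * K * (M + 1) * n \<le> K * (M + 1) * (M + 2) * a + 2 * e"
proof (cases "M * (K * n) \<le> 2 * e")
  case True
  have "(M + 2) * (K * n) \<le> (M + 2) * (K * ((M + 1) * a))"
    by (intro mult_le_mono2 many_indep)
  with True show ?thesis by (simp add: algebra_simps)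
next
  case False
  then have "1 \<le> M" by (cases M) auto
  with prev False have "M * (K * n) < M * (K * (M + 1) * a)"
    by (simp add: algebra_simps)
  then have "K * n \<le> K * (M + 1) * a" by simp
  with prev \<open>1 \<le> M\<close> show ?thesis by (simp add: algebra_simps)
qed

text \<open>Induction step from M to M + 1, by induction on the number of vertices: a vertex of
  degree at least (M+1)(k+1) is deleted; otherwise the Lov\'asz partition applies.\<close>
lemma counting_bound_step:
  assumes prev: "1 \<le> M \<Longrightarrow> \<forall>(V' :: 'a set) E'. simple_graph V' E' \<longrightarrow> counting_bound k M V' E'"
    and sg: "simple_graph (V :: 'a set) E"
  shows "counting_bound k (M + 1) V E"
  using sg
proof (induction "card V" arbitrary: V E rule: less_induct)
  case less
  let ?K = "k + 1"
  show ?case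
  proof (cases "\<exists>v\<in>V. (M + 1) * ?K \<le> card {u\<in>V. {u, v} \<in> E}")
    case True
    then obtain v where v: "v \<in> V" and high: "(M + 1) * ?K \<le> card {u\<in>V. {u, v} \<in> E}"
      by blast
    let ?V' = "V - {v}" and ?E' = "{e\<in>E. v \<notin> e}"
    have card_V: "card V = card ?V' + 1"
      using less.prems v by (metis card_Suc_Diff1 Suc_eq_plus1 simple_graph_def)
    have "counting_bound k (M + 1) ?V' ?E'"
      using less.hyps[of ?V'] delete_vertex(1)[OF less.prems v] card_V by simp
    moreover have "card E = card ?E' + card {u\<in>V. {u, v} \<in> E}"
      using delete_vertex(2)[OF less.prems v] card_incident_edges[OF less.prems, of v "\<lambda>_. True"]
      by simp
    moreover have "?K * (M + 1) * (M + 2) * alpha_k ?V' ?E' k \<le> ?K * (M + 1) * (M + 2) * alpha_k V E k"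
      by (intro mult_le_mono2 delete_vertex(3)[OF less.prems v])
    moreover have "2 * ?K * (M + 1) * card V = 2 * ?K * (M + 1) * card ?V' + 2 * ((M + 1) * ?K)"
      unfolding card_V by (simp add: algebra_simps)
    ultimately show ?thesis
      using high unfolding counting_bound_def by (simp add: add.assoc)
  next
    case False
    then obtain S where S: "k_independent V E k S" "card V \<le> (M + 1) * card S"
      using lovasz_partition[OF less.prems, of "M + 1" k] by (auto simp: not_le)
    then have "card V \<le> (M + 1) * alpha_k V E k"
      using alpha_k_attained(2)[OF less.prems S(1)] by (meson le_trans mult_le_mono2)
    then show ?thesis
      using counting_arith[of "card V" M "alpha_k V E k" ?K "card E"] prev less.prems
      unfolding counting_bound_def by (simp add: add.assoc)
  qed
qed

lemma counting_bound:
  assumes "1 \<le> m" "simple_graph (V :: 'a set) E"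
  shows "counting_bound k m V E"
proof -
  obtain M where m: "m = M + 1" using assms(1) by (metis add.commute le_Suc_ex)
  have "\<forall>(V :: 'a set) E. simple_graph V E \<longrightarrow> counting_bound k (M + 1) V E"
  proof (induction M)
    case 0
    show ?case by (intro allI impI counting_bound_step) simp_all
  next
    case (Suc M)
    then show ?case by (intro allI impI counting_bound_step) auto
  qed
  with assms(2) show ?thesis unfolding m by blast
qed

lemma avg_degree_le_iff:
  assumes "simple_graph V E" "V \<noteq> {}"
  shows "avg_degree V E \<le> real d \<longleftrightarrow> 2 * card E \<le> d * card V"
proof -
  have "real (card V) > 0" using assms unfolding simple_graph_def by auto
  then have "avg_degree V E \<le> real d \<longleftrightarrow> real (2 * card E) \<le> real (d * card V)"
    unfolding avg_degree_def by (simp add: divide_simps)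
  then show ?thesis by (simp only: of_nat_le_iff)
qed

lemma alpha_ratio_lower_bound:
  assumes sg: "simple_graph V E" and ne: "V \<noteq> {}"
    and density: "2 * card E \<le> d * card V" and M: "1 \<le> M"
  shows "(real (2 * (k + 1) * M) - real d) / real ((k + 1) * M * (M + 1))
           \<le> real (alpha_k V E k) / real (card V)"
proof -
  have n: "card V > 0" using sg ne unfolding simple_graph_def by auto
  have "2 * (k + 1) * M * card V \<le> (k + 1) * M * (M + 1) * alpha_k V E k + d * card V"
    using counting_bound[OF M sg, of k] density unfolding counting_bound_def by linarith
  hence "real (2 * (k + 1) * M * card V)
           \<le> real ((k + 1) * M * (M + 1) * alpha_k V E k) + real (d * card V)"
    by (metis of_nat_add of_nat_le_iff)
  hence "(real (2 * (k + 1) * M) - real d) * real (card V)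
           \<le> real ((k + 1) * M * (M + 1)) * real (alpha_k V E k)"
    by (simp add: algebra_simps)
  moreover have "(k + 1) * M * (M + 1) > 0" using M by simp
  hence "real ((k + 1) * M * (M + 1)) > 0" by (simp only: of_nat_0_less_iff)
  ultimately show ?thesis using n by (simp add: divide_simps mult.commute)
qed

lemma residue_parameter:
  fixes d t k :: nat
  assumes "1 \<le> t" "t \<le> k + 1" "d mod (k + 1) = (k + 1 - t) mod (k + 1)"
  shows "\<exists>M\<ge>1. (k + 1) * M = d + t"
proof -
  have "d mod (k + 1) = k + 1 - t" using assms by simp
  moreover have "d = (k + 1) * (d div (k + 1)) + d mod (k + 1)"
    by (rule mult_div_mod_eq[symmetric])
  ultimately have "d + t = (k + 1) * (d div (k + 1) + 1)"
    using assms(2) by (simp add: algebra_simps)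
  thus ?thesis by (metis le_add2)
qed

lemma residue_bound_value:
  assumes "1 \<le> M" "(k + 1) * M = d + t"
  shows "(real (2 * (k + 1) * M) - real d) / real ((k + 1) * M * (M + 1))
       = real (k + 1) * real (d + 2 * t) / (real (d + k + t + 1) * real (d + t))"
proof -
  have "2 * (k + 1) * M = (d + 2 * t) + d" using assms(2) by (simp add: mult.assoc)
  hence numerator: "real (2 * (k + 1) * M) - real d = real (d + 2 * t)"
    by (metis add_diff_cancel_right' of_nat_add)
  have denominator: "real ((k + 1) * M * (M + 1)) = real (d + t) * real (M + 1)"
    using assms(2) by (metis of_nat_mult)
  have "d + k + t + 1 = (k + 1) * (M + 1)" using assms(2) by (simp add: algebra_simps)
  hence "real (d + k + t + 1) = real (k + 1) * real (M + 1)" by (metis of_nat_mult)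
  then show ?thesis unfolding numerator denominator by simp
qed

lemma residue_bound_ge:
  assumes "1 \<le> t" "t \<le> k + 1"
  shows "real (k + 1) / real (d + k + 1)
           \<le> real (k + 1) * real (d + 2 * t) / (real (d + k + t + 1) * real (d + t))"
proof -
  obtain s where s: "k + 1 = t + s" using assms(2) by (metis le_add_diff_inverse)
  hence sums: "d + k + t + 1 = d + 2 * t + s" "d + k + 1 = d + t + s" by simp_all
  have "(d + k + t + 1) * (d + t) = (d + 2 * t) * (d + t) + s * (d + t)"
    unfolding sums by (simp add: algebra_simps)
  also have "\<dots> \<le> (d + 2 * t) * (d + t) + s * (d + 2 * t)" by simp
  also have "\<dots> = (d + 2 * t) * (d + k + 1)" unfolding sums by (simp add: algebra_simps)
  finally have "real (d + k + t + 1) * real (d + t) \<le> real (d + 2 * t) * real (d + k + 1)"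
    by (metis of_nat_le_iff of_nat_mult)
  moreover have "real (d + t) > 0" "real (d + k + 1) > 0" "real (d + k + t + 1) > 0"
    using assms by auto
  ultimately show ?thesis by (simp add: divide_simps)
qed

lemma alpha_ratio_residue_bound:
  assumes sg: "simple_graph V E" and ne: "V \<noteq> {}" and density: "2 * card E \<le> d * card V"
    and t: "1 \<le> t" "t \<le> k + 1" "d mod (k + 1) = (k + 1 - t) mod (k + 1)"
  shows "real (k + 1) * real (d + 2 * t) / (real (d + k + t + 1) * real (d + t))
           \<le> real (alpha_k V E k) / real (card V)"
proof -
  obtain M where M: "1 \<le> M" "(k + 1) * M = d + t" using residue_parameter[OF t] by blast
  show ?thesis
    using alpha_ratio_lower_bound[OF sg ne density M(1), of k] residue_bound_value[OF M] by simp
qed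

lemma alpha_k_ceiling_bound:
  assumes sg: "simple_graph V E" and ne: "V \<noteq> {}"
  shows "real (k + 1) / (real_of_int \<lceil>avg_degree V E\<rceil> + real k + 1) * real (card V)
           \<le> real (alpha_k V E k)"
proof -
  define d where "d = nat \<lceil>avg_degree V E\<rceil>"
  have "avg_degree V E \<ge> 0" unfolding avg_degree_def by simp
  hence d_real: "real d = real_of_int \<lceil>avg_degree V E\<rceil>" unfolding d_def by simp
  hence "2 * card E \<le> d * card V"
    using avg_degree_le_iff[OF sg ne] le_of_int_ceiling by metis
  moreover define t where "t = k + 1 - d mod (k + 1)"
  have "d mod (k + 1) < k + 1" by simp
  hence t: "1 \<le> t" "t \<le> k + 1" "d mod (k + 1) = (k + 1 - t) mod (k + 1)"
    unfolding t_def by (linarith, linarith, simp)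
  ultimately have "real (k + 1) * real (d + 2 * t) / (real (d + k + t + 1) * real (d + t))
                     \<le> real (alpha_k V E k) / real (card V)"
    by (intro alpha_ratio_residue_bound[OF sg ne])
  hence "real (k + 1) / real (d + k + 1) \<le> real (alpha_k V E k) / real (card V)"
    using residue_bound_ge[OF t(1,2), of d] by linarith
  moreover have "real (card V) > 0" using sg ne unfolding simple_graph_def by auto
  ultimately show ?thesis using d_real by (simp add: divide_simps add.commute add.left_commute)
qed

section \<open>Bounds on f(k, d)\<close>

lemma f_ge_ratio_bound:
  assumes "\<And>(V :: nat set) E. simple_graph V E \<Longrightarrow> V \<noteq> {} \<Longrightarrow> 2 * card E \<le> d * card V
             \<Longrightarrow> x \<le> real (alpha_k V E k) / real (card V)"
  shows "x \<le> f k d"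
  unfolding f_def
proof (rule cInf_greatest)
  have "simple_graph {0 :: nat} {}" "avg_degree {0 :: nat} {} \<le> real d"
    by (simp_all add: simple_graph_def avg_degree_def)
  then show "{real (alpha_k V E k) / real (card V) | V E :: nat set set.
                simple_graph V E \<and> V \<noteq> {} \<and> avg_degree V E \<le> real d} \<noteq> {}"
    by blast
qed (use assms avg_degree_le_iff in blast)

lemma f_le_ratio:
  assumes "simple_graph (V :: nat set) E" "V \<noteq> {}" "avg_degree V E \<le> real d"
  shows "f k d \<le> real (alpha_k V E k) / real (card V)"
  unfolding f_def
proof (rule cInf_lower)
  show "bdd_below {real (alpha_k V E k) / real (card V) | V E :: nat set set.
                     simple_graph V E \<and> V \<noteq> {} \<and> avg_degree V E \<le> real d}"
    by (rule bdd_belowI[of _ 0]) auto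
qed (use assms in blast)

lemma f_residue_bound:
  assumes "1 \<le> t" "t \<le> k + 1" "d mod (k + 1) = (k + 1 - t) mod (k + 1)"
  shows "real (k + 1) * real (d + 2 * t) / (real (d + k + t + 1) * real (d + t)) \<le> f k d"
  using assms by (intro f_ge_ratio_bound alpha_ratio_residue_bound) auto

text \<open>Part (2): the case m = 1 of the counting inequality (meaningful when d \<le> k).\<close>
lemma f_single_class_bound: "(2 * real k + 2 - real d) / (2 * real k + 2) \<le> f k d"
proof (rule f_ge_ratio_bound)
  fix V :: "nat set" and E
  assume "simple_graph V E" "V \<noteq> {}" "2 * card E \<le> d * card V"
  from alpha_ratio_lower_bound[OF this order_refl, of k]
  show "(2 * real k + 2 - real d) / (2 * real k + 2) \<le> real (alpha_k V E k) / real (card V)"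
    by (simp add: algebra_simps)
qed

text \<open>Deleting one leaf gives a k-independent set, but the whole vertex
  set is not k-independent since the centre has k+1 neighbours.\<close>
lemma star_with_isolated_vertices:
  assumes k: "1 \<le> k"
  defines "V \<equiv> {0..<2 * k + 2}" and "E \<equiv> {{0, i} | i::nat. 1 \<le> i \<and> i \<le> k + 1}"
  shows "simple_graph V E" "avg_degree V E \<le> 1" "alpha_k V E k = 2 * k + 1"
proof -
  have E_image: "E = (\<lambda>i. {0, i}) ` {1..k + 1}" unfolding E_def by auto
  have "inj_on (\<lambda>i::nat. {0, i}) {1..k + 1}" by (auto simp: inj_on_def doubleton_eq_iff)
  hence card_E: "card E = k + 1" unfolding E_image by (simp add: card_image)
  have card_V: "card V = 2 * k + 2" unfolding V_def by simp
  show sg: "simple_graph V E" unfolding simple_graph_def V_def E_image by auto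
  show "avg_degree V E \<le> 1" unfolding avg_degree_def card_E card_V by simp
  have edge: "{u, w} \<in> E \<longleftrightarrow> (u = 0 \<and> 1 \<le> w \<and> w \<le> k + 1) \<or> (w = 0 \<and> 1 \<le> u \<and> u \<le> k + 1)"
    for u w unfolding E_def by (auto simp: doubleton_eq_iff)
  have "k_independent V E k (V - {1})"
    unfolding k_independent_def
  proof (intro conjI ballI)
    fix w assume w: "w \<in> V - {1}"
    show "card {u \<in> V - {1}. {u, w} \<in> E} \<le> k"
    proof (cases "w = 0")
      case True
      have "{u \<in> V - {1}. {u, w} \<in> E} = {2..k + 1}" unfolding edge True V_def by auto
      thus ?thesis by simp
    next
      case False
      have "{u \<in> V - {1}. {u, w} \<in> E} \<subseteq> {0}" unfolding edge using False by auto
      hence "card {u \<in> V - {1}. {u, w} \<in> E} \<le> card {0::nat}" by (intro card_mono) auto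
      thus ?thesis using k by simp
    qed
  qed auto
  moreover have "card (V - {1}) = 2 * k + 1" unfolding V_def by simp
  ultimately have lower: "2 * k + 1 \<le> alpha_k V E k"
    using alpha_k_attained(2)[OF sg, of k "V - {1}"] by simp
  obtain S where S: "k_independent V E k S" "card S = alpha_k V E k"
    using alpha_k_attained(1)[OF sg] by blast
  have "S \<noteq> V"
  proof
    assume "S = V"
    then have "card {u \<in> V. {u, 0} \<in> E} \<le> k"
      using S(1) unfolding k_independent_def V_def by simp
    moreover have "{u \<in> V. {u, 0} \<in> E} = {1..k + 1}" unfolding edge V_def by auto
    ultimately show False by simp
  qed
  moreover have "S \<subseteq> V" using S(1) unfolding k_independent_def by blast
  ultimately have "card S < card V"
    using psubset_card_mono[of V S] unfolding V_def by blast
  with lower S(2) card_V show "alpha_k V E k = 2 * k + 1" by simp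
qed

lemma f_k_1:
  assumes k: "1 \<le> k"
  shows "f k 1 = (2 * real k + 1) / (2 * real k + 2)"
proof -
  let ?V = "{0..<2 * k + 2}" and ?E = "{{0, i} | i::nat. 1 \<le> i \<and> i \<le> k + 1}"
  note star = star_with_isolated_vertices[OF k]
  have "avg_degree ?V ?E \<le> real 1" using star(2) by simp
  then have "f k 1 \<le> real (alpha_k ?V ?E k) / real (card ?V)"
    by (intro f_le_ratio[OF star(1)]) auto
  also have "\<dots> = (2 * real k + 1) / (2 * real k + 2)"
    unfolding star(3) by (simp add: add.commute)
  finally show ?thesis using f_single_class_bound[of k 1] by (simp add: algebra_simps)
qed

theorem mainTheorem7:
  fixes k d :: nat
  shows
    "(\<forall>t::nat. 1 \<le> t \<and> t \<le> k + 1 \<and> d mod (k + 1) = (k + 1 - t) mod (k + 1) \<longrightarrow>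
        f k d \<ge> real (k + 1) * real (d + 2 * t) / (real (d + k + t + 1) * real (d + t)) \<and>
        real (k + 1) * real (d + 2 * t) / (real (d + k + t + 1) * real (d + t))
          \<ge> real (k + 1) / real (d + k + 1))
     \<and> (k \<ge> d \<longrightarrow> f k d \<ge> (2 * real k + 2 - real d) / (2 * real k + 2))
     \<and> (k \<ge> 1 \<longrightarrow>
          f k 1 = (2 * real k + 1) / (2 * real k + 2) \<and>
          (let V = {0..<2 * k + 2}; E = {{0, i} | i::nat. 1 \<le> i \<and> i \<le> k + 1} in
             simple_graph V E \<and> avg_degree V E \<le> 1 \<and>
             real (alpha_k V E k) / real (card V) = (2 * real k + 1) / (2 * real k + 2)))
     \<and> (\<forall>(V :: 'a set) E. simple_graph V E \<and> V \<noteq> {} \<longrightarrow>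
          real (alpha_k V E k) \<ge>
            real (k + 1) / (real_of_int \<lceil>avg_degree V E\<rceil> + real k + 1) * real (card V))"
proof (intro conjI allI impI)
  fix t :: nat assume "1 \<le> t \<and> t \<le> k + 1 \<and> d mod (k + 1) = (k + 1 - t) mod (k + 1)"
  then show "f k d \<ge> real (k + 1) * real (d + 2 * t) / (real (d + k + t + 1) * real (d + t))"
    and "real (k + 1) * real (d + 2 * t) / (real (d + k + t + 1) * real (d + t))
           \<ge> real (k + 1) / real (d + k + 1)"
    using f_residue_bound residue_bound_ge by simp_all
next
  show "(2 * real k + 2 - real d) / (2 * real k + 2) \<le> f k d" by (rule f_single_class_bound)
next
  assume k: "1 \<le> k"
  then show "f k 1 = (2 * real k + 1) / (2 * real k + 2)" by (rule f_k_1)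
  show "let V = {0..<2 * k + 2}; E = {{0, i} | i::nat. 1 \<le> i \<and> i \<le> k + 1} in
          simple_graph V E \<and> avg_degree V E \<le> 1 \<and>
          real (alpha_k V E k) / real (card V) = (2 * real k + 1) / (2 * real k + 2)"
    using star_with_isolated_vertices[OF k] by (simp add: add.commute)
next
  fix V :: "'a set" and E assume "simple_graph V E \<and> V \<noteq> {}"
  then show "real (k + 1) / (real_of_int \<lceil>avg_degree V E\<rceil> + real k + 1) * real (card V)
               \<le> real (alpha_k V E k)"
    using alpha_k_ceiling_bound by blast
qed

end
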